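(* Let $\tilde{A}\in\mathbb{Q}^{q\times n}$, $\tilde{b}\in\mathbb{Q}^q$ be the constraint data of the LP relaxation $P=\{x:\tilde{A}x\ge\tilde{b}\}=\{x:Ax\ge b,\ x\ge 0,\ x_j\le 1,\ j=1,\dots,p\}$ ($q=m+n+p$, $Q=\{1,\dots,q\}$), let $\bar{x}\in P$, and let $T$ be a finite index set with $D^t\in\mathbb{Q}^{r\times n}$, $d_0^t\in\mathbb{Q}^r$ for $t\in T$. Let $\bar{w}=(\bar{\alpha},\bar{\beta},\{\bar{u}^t,\bar{v}^t\}_{t\in T})$ be a basic optimal solution of the CGLP (minimize $\alpha\bar{x}-\beta$ over the CGLP system) such that the cut separates $\bar{x}$, i.e. $\bar{\alpha}\bar{x}<\bar{\beta}$. Let $(\check{\theta},\check{\delta},\{\check{u}^t,\check{v}^t\}_{t\in T})$ be an optimal solution of the RCV-MILP for the cut $\bar{\alpha}x\ge\bar{\beta}$. Then the cut $\bar{\alpha}x\ge\bar{\beta}$ is not strictly irregular if and only if $\check{\theta}>0$.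
   Context: The CGLP system consists of variables $\alpha\in\mathbb{R}^n$, $\beta\in\mathbb{R}$, $u^t\in\mathbb{R}^q$, $v^t\in\mathbb{R}^r$ ($t\in T$) and constraints: $\alpha-u^t\tilde{A}-v^tD^t=0$ and $\beta-u^t\tilde{b}-v^td_0^t=0$ for all $t\in T$; $\sum_{t\in T}\sum_{i=1}^q u^t_i+\sum_{t\in T}\sum_{i=1}^r v^t_i=1$; $u^t,v^t\ge 0$ for all $t\in T$. For a feasible solution with multipliers $u$, let $N(u)=\{j\in Q: u^t_j>0\text{ for some } t\in T\}$ and let $\tilde{A}_N$ denote the submatrix of $\tilde{A}$ with rows indexed by $N$. A feasible solution of the CGLP system (basic or not) is called extended regular if $\tilde{A}_{N(u)}$ has full row rank. A cut $\alpha x\ge\beta$ is strictly irregular if there is no extended regular feasible CGLP solution whose $(\alpha,\beta)$-component equals $(\alpha,\beta)$ up to a positive scalar multiple. The RCV-MILP for the cut $\bar{\alpha}x\ge\bar{\beta}$ has variables $\theta\in[0,1]$, $\delta_j\in\{0,1\}$ ($j\in Q$), $u^t\in\mathbb{R}^q$, $v^t\in\mathbb{R}^r$ ($t\in T$), and is: maximize $\theta$ subject to $\theta\bar{\alpha}-u^t\tilde{A}-v^tD^t=0$ and $\theta\bar{\beta}-u^t\tilde{b}-v^td_0^t=0$ for all $t\in T$; $\delta_j-u^t_j\ge 0$ for all $j\in Q$, $t\in T$; $\sum_{j\in Q}\delta_j\le n$; $\sum_{j\in N}\delta_j\le\operatorname{rank}(\tilde{A}_N)$ for every subset $N\subseteq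 Q$; $u^t,v^t\ge 0$ for all $t\in T$. *)

theory Defs
  imports "HOL-Analysis.Analysis"
begin

text \<open>Rows are indexed by the sum type 'm + ('n + 'n):
  Inl i            : row i of A       (A_i x \<ge> b_i),
  Inr (Inl j)      : x_j \<ge> 0,
  Inr (Inr j), j\<in>J : -x_j \<ge> -1.
  Hence q = m + n + p with p = card J.\<close>

type_synonym ('m, 'n) qidx = "'m + ('n + 'n)"

definition Qset :: "'n set \<Rightarrow> ('m, 'n) qidx set" where
  "Qset J = range Inl \<union> range (Inr \<circ> Inl) \<union> (Inr \<circ> Inr) ` J"

fun Atil :: "real^'n^'m \<Rightarrow> ('m, 'n) qidx \<Rightarrow> real^'n" where
  "Atil A (Inl i) = A $ i"
| "Atil A (Inr (Inl j)) = axis j 1"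
| "Atil A (Inr (Inr j)) = - axis j 1"

fun btil :: "real^'m \<Rightarrow> ('m, 'n) qidx \<Rightarrow> real" where
  "btil b (Inl i) = b $ i"
| "btil b (Inr (Inl j)) = 0"
| "btil b (Inr (Inr j)) = -1"

definition lp_relax :: "real^'n^'m \<Rightarrow> real^'m \<Rightarrow> 'n set \<Rightarrow> (real^'n) set" where
  "lp_relax A b J = {x. \<forall>i\<in>Qset J. Atil A i \<bullet> x \<ge> btil b i}"

definition rank_rows :: "('q \<Rightarrow> real^'n) \<Rightarrow> 'q set \<Rightarrow> nat" where
  "rank_rows M N = dim (M ` N)"

definition full_row_rank :: "('q \<Rightarrow> real^'n) \<Rightarrow> 'q set \<Rightarrow> bool" where
  "full_row_rank M N \<longleftrightarrow> rank_rows M N = card N"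

definition cglp_feasible ::
  "real^'n^'m \<Rightarrow> real^'m \<Rightarrow> 'n set \<Rightarrow> 't set \<Rightarrow> ('t \<Rightarrow> real^'n^'r) \<Rightarrow> ('t \<Rightarrow> real^'r)
   \<Rightarrow> real^'n \<Rightarrow> real \<Rightarrow> ('t \<Rightarrow> ('m,'n) qidx \<Rightarrow> real) \<Rightarrow> ('t \<Rightarrow> real^'r) \<Rightarrow> bool" where
  "cglp_feasible A b J T D d0 \<alpha> \<beta> u v \<longleftrightarrow>
     (\<forall>t\<in>T. \<alpha> - (\<Sum>i\<in>Qset J. u t i *\<^sub>R Atil A i) - (v t v* D t) = 0
           \<and> \<beta> - (\<Sum>i\<in>Qset J. u t i * btil b i) - (v t \<bullet> d0 t) = 0)
   \<and> (\<Sum>t\<in>T. \<Sum>i\<in>Qset J. u t i) + (\<Sum>t\<in>T. \<Sum>k\<in>UNIV. v t $ k) = 1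
   \<and> (\<forall>t\<in>T. (\<forall>i\<in>Qset J. u t i \<ge> 0) \<and> (\<forall>k. v t $ k \<ge> 0))
   \<and> (\<forall>t i. t \<notin> T \<or> i \<notin> Qset J \<longrightarrow> u t i = 0)
   \<and> (\<forall>t. t \<notin> T \<longrightarrow> v t = 0)"

text \<open>basic feasible solution = extreme point (vertex) of the CGLP polyhedron\<close>
definition cglp_basic ::
  "real^'n^'m \<Rightarrow> real^'m \<Rightarrow> 'n set \<Rightarrow> 't set \<Rightarrow> ('t \<Rightarrow> real^'n^'r) \<Rightarrow> ('t \<Rightarrow> real^'r)
   \<Rightarrow> real^'n \<Rightarrow> real \<Rightarrow> ('t \<Rightarrow> ('m,'n) qidx \<Rightarrow> real) \<Rightarrow> ('t \<Rightarrow> real^'r) \<Rightarrow> bool" where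
  "cglp_basic A b J T D d0 \<alpha> \<beta> u v \<longleftrightarrow>
     cglp_feasible A b J T D d0 \<alpha> \<beta> u v \<and>
     (\<forall>\<alpha>1 \<beta>1 u1 v1 \<alpha>2 \<beta>2 u2 v2.
        cglp_feasible A b J T D d0 \<alpha>1 \<beta>1 u1 v1 \<and> cglp_feasible A b J T D d0 \<alpha>2 \<beta>2 u2 v2 \<and>
        \<alpha> = (1/2) *\<^sub>R (\<alpha>1 + \<alpha>2) \<and> \<beta> = (\<beta>1 + \<beta>2) / 2 \<and>
        u = (\<lambda>t i. (u1 t i + u2 t i) / 2) \<and> v = (\<lambda>t. (1/2) *\<^sub>R (v1 t + v2 t))
        \<longrightarrow> \<alpha>1 = \<alpha>2 \<and> \<beta>1 = \<beta>2 \<and> u1 = u2 \<and> v1 = v2)"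

definition cglp_optimal ::
  "real^'n^'m \<Rightarrow> real^'m \<Rightarrow> 'n set \<Rightarrow> 't set \<Rightarrow> ('t \<Rightarrow> real^'n^'r) \<Rightarrow> ('t \<Rightarrow> real^'r) \<Rightarrow> real^'n
   \<Rightarrow> real^'n \<Rightarrow> real \<Rightarrow> ('t \<Rightarrow> ('m,'n) qidx \<Rightarrow> real) \<Rightarrow> ('t \<Rightarrow> real^'r) \<Rightarrow> bool" where
  "cglp_optimal A b J T D d0 xbar \<alpha> \<beta> u v \<longleftrightarrow>
     cglp_feasible A b J T D d0 \<alpha> \<beta> u v \<and>
     (\<forall>\<alpha>' \<beta>' u' v'. cglp_feasible A b J T D d0 \<alpha>' \<beta>' u' v' \<longrightarrow>
        \<alpha> \<bullet> xbar - \<beta> \<le> \<alpha>' \<bullet> xbar - \<beta>')"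

definition Nsupp :: "'n set \<Rightarrow> 't set \<Rightarrow> ('t \<Rightarrow> ('m,'n) qidx \<Rightarrow> real) \<Rightarrow> ('m,'n) qidx set" where
  "Nsupp J T u = {j \<in> Qset J. \<exists>t\<in>T. u t j > 0}"

definition extended_regular ::
  "real^'n^'m \<Rightarrow> real^'m \<Rightarrow> 'n set \<Rightarrow> 't set \<Rightarrow> ('t \<Rightarrow> real^'n^'r) \<Rightarrow> ('t \<Rightarrow> real^'r)
   \<Rightarrow> real^'n \<Rightarrow> real \<Rightarrow> ('t \<Rightarrow> ('m,'n) qidx \<Rightarrow> real) \<Rightarrow> ('t \<Rightarrow> real^'r) \<Rightarrow> bool" where
  "extended_regular A b J T D d0 \<alpha> \<beta> u v \<longleftrightarrow>
     cglp_feasible A b J T D d0 \<alpha> \<beta> u v \<and> full_row_rank (Atil A) (Nsupp J T u)"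

definition strictly_irregular ::
  "real^'n^'m \<Rightarrow> real^'m \<Rightarrow> 'n set \<Rightarrow> 't set \<Rightarrow> ('t \<Rightarrow> real^'n^'r) \<Rightarrow> ('t \<Rightarrow> real^'r)
   \<Rightarrow> real^'n \<Rightarrow> real \<Rightarrow> bool" where
  "strictly_irregular A b J T D d0 \<alpha>c \<beta>c \<longleftrightarrow>
     \<not> (\<exists>\<alpha> \<beta> u v s. s > 0 \<and> extended_regular A b J T D d0 \<alpha> \<beta> u v \<and>
          \<alpha> = s *\<^sub>R \<alpha>c \<and> \<beta> = s * \<beta>c)"

definition rcv_feasible ::
  "real^'n^'m \<Rightarrow> real^'m \<Rightarrow> 'n set \<Rightarrow> 't set \<Rightarrow> ('t \<Rightarrow> real^'n^'r) \<Rightarrow> ('t \<Rightarrow> real^'r)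
   \<Rightarrow> real^'n \<Rightarrow> real \<Rightarrow> real \<Rightarrow> (('m,'n) qidx \<Rightarrow> real)
   \<Rightarrow> ('t \<Rightarrow> ('m,'n) qidx \<Rightarrow> real) \<Rightarrow> ('t \<Rightarrow> real^'r) \<Rightarrow> bool" where
  "rcv_feasible A b J T D d0 \<alpha>c \<beta>c \<theta> \<delta> u v \<longleftrightarrow>
     0 \<le> \<theta> \<and> \<theta> \<le> 1
   \<and> (\<forall>j\<in>Qset J. \<delta> j \<in> {0, 1}) \<and> (\<forall>j. j \<notin> Qset J \<longrightarrow> \<delta> j = 0)
   \<and> (\<forall>t\<in>T. \<theta> *\<^sub>R \<alpha>c - (\<Sum>i\<in>Qset J. u t i *\<^sub>R Atil A i) - (v t v* D t) = 0
           \<and> \<theta> * \<beta>c - (\<Sum>i\<in>Qset J. u t i * btil b i) - (v t \<bullet> d0 t) = 0)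
   \<and> (\<forall>j\<in>Qset J. \<forall>t\<in>T. \<delta> j - u t j \<ge> 0)
   \<and> (\<Sum>j\<in>Qset J. \<delta> j) \<le> real CARD('n)
   \<and> (\<forall>N. N \<subseteq> Qset J \<longrightarrow> (\<Sum>j\<in>N. \<delta> j) \<le> real (rank_rows (Atil A) N))
   \<and> (\<forall>t\<in>T. (\<forall>i\<in>Qset J. u t i \<ge> 0) \<and> (\<forall>k. v t $ k \<ge> 0))
   \<and> (\<forall>t i. t \<notin> T \<or> i \<notin> Qset J \<longrightarrow> u t i = 0)
   \<and> (\<forall>t. t \<notin> T \<longrightarrow> v t = 0)"

definition rcv_optimal ::
  "real^'n^'m \<Rightarrow> real^'m \<Rightarrow> 'n set \<Rightarrow> 't set \<Rightarrow> ('t \<Rightarrow> real^'n^'r) \<Rightarrow> ('t \<Rightarrow> real^'r)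
   \<Rightarrow> real^'n \<Rightarrow> real \<Rightarrow> real \<Rightarrow> (('m,'n) qidx \<Rightarrow> real)
   \<Rightarrow> ('t \<Rightarrow> ('m,'n) qidx \<Rightarrow> real) \<Rightarrow> ('t \<Rightarrow> real^'r) \<Rightarrow> bool" where
  "rcv_optimal A b J T D d0 \<alpha>c \<beta>c \<theta> \<delta> u v \<longleftrightarrow>
     rcv_feasible A b J T D d0 \<alpha>c \<beta>c \<theta> \<delta> u v \<and>
     (\<forall>\<theta>' \<delta>' u' v'. rcv_feasible A b J T D d0 \<alpha>c \<beta>c \<theta>' \<delta>' u' v' \<longrightarrow> \<theta>' \<le> \<theta>)"

end

theory Submission
  imports Defs
begin

text \<open>The RCV-MILP is the CGLP system for the multiples \<open>\<theta> (\<alpha>, \<beta>)\<close> of the cut, with the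
  normalisation dropped and with a binary \<open>\<delta>\<close> that dominates the multipliers and obeys the
  rank constraints. Scaling an extended regular CGLP solution for a positive multiple \<open>s\<close> of the
  cut down by \<open>1/(s+1)\<close>, and taking \<open>\<delta>\<close> to be the indicator of its support \<open>N\<close>, gives an
  RCV-MILP solution with \<open>\<theta> > 0\<close>: the rank constraints hold because every subset of the
  independent rows \<open>Atil A ` N\<close> is independent. Conversely, if \<open>\<theta> > 0\<close> then \<open>\<delta> = 1\<close> on the support
  of the multipliers, so the rank constraint for the support says that it has full row rank,
  and renormalising the multipliers to total mass one yields an extended regular CGLP solution
  for a positive multiple of the cut; the mass is positive because a separating cut is not
  zero.\<close>

lemma rank_rows_le_card:
  assumes "finite N"
  shows "rank_rows M N \<le> card N"
proof -
  have "dim (M ` N) \<le> card (M ` N)"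
    using assms by (simp add: dim_le_card')
  also have "\<dots> \<le> card N"
    using assms by (rule card_image_le)
  finally show ?thesis
    unfolding rank_rows_def .
qed

lemma rank_rows_mono: "N \<subseteq> N' \<Longrightarrow> rank_rows M N \<le> rank_rows M N'"
  unfolding rank_rows_def by (intro dim_subset image_mono)

lemma rank_rows_le_dimension: "rank_rows (M :: 'q \<Rightarrow> real^'n::finite) N \<le> CARD('n)"
  unfolding rank_rows_def by (rule dim_subset_UNIV_cart)

lemma full_row_rank_iff_card_le_rank:
  "finite N \<Longrightarrow> full_row_rank M N \<longleftrightarrow> card N \<le> rank_rows M N"
  unfolding full_row_rank_def using rank_rows_le_card[of N M] by linarith

lemma full_row_rank_subset:
  assumes "full_row_rank M S" and "finite S" and "N \<subseteq> S"
  shows "full_row_rank M N"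
proof -
  have card_rows: "card (M ` S) = card S"
    using assms(1,2) rank_rows_le_card[of S M] card_image_le[of S M] dim_le_card'[of "M ` S"]
    unfolding full_row_rank_def rank_rows_def by simp
  then have "inj_on M S"
    using assms(2) by (simp add: eq_card_imp_inj_on)
  have "independent (M ` S)"
    using card_eq_dim[of "M ` S" "M ` S"] card_rows assms(1,2)
    unfolding full_row_rank_def rank_rows_def by (simp add: span_superset)
  then have "independent (M ` N)"
    using assms(3) by (meson image_mono independent_mono)
  then have "dim (M ` N) = card (M ` N)"
    by (rule dim_eq_card_independent)
  also have "\<dots> = card N"
    using \<open>inj_on M S\<close> assms(3) by (meson card_image inj_on_subset)
  finally show ?thesis
    unfolding full_row_rank_def rank_rows_def .
qed

definition cut_multipliers ::
  "real^'n^'m \<Rightarrow> real^'m \<Rightarrow> 'n set \<Rightarrow> 't set \<Rightarrow> ('t \<Rightarrow> real^'n^'r) \<Rightarrow> ('t \<Rightarrow> real^'r)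
   \<Rightarrow> real^'n \<Rightarrow> real \<Rightarrow> ('t \<Rightarrow> ('m,'n) qidx \<Rightarrow> real) \<Rightarrow> ('t \<Rightarrow> real^'r) \<Rightarrow> bool" where
  "cut_multipliers A b J T D d0 \<alpha> \<beta> u v \<longleftrightarrow>
     (\<forall>t\<in>T. \<alpha> = (\<Sum>i\<in>Qset J. u t i *\<^sub>R Atil A i) + v t v* D t
           \<and> \<beta> = (\<Sum>i\<in>Qset J. u t i * btil b i) + v t \<bullet> d0 t)
   \<and> (\<forall>t\<in>T. (\<forall>i\<in>Qset J. u t i \<ge> 0) \<and> (\<forall>k. v t $ k \<ge> 0))
   \<and> (\<forall>t i. t \<notin> T \<or> i \<notin> Qset J \<longrightarrow> u t i = 0)
   \<and> (\<forall>t. t \<notin> T \<longrightarrow> v t = 0)"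

definition multiplier_mass ::
  "'n set \<Rightarrow> 't set \<Rightarrow> ('t \<Rightarrow> ('m,'n) qidx \<Rightarrow> real) \<Rightarrow> ('t \<Rightarrow> real^'r::finite) \<Rightarrow> real" where
  "multiplier_mass J T u v = (\<Sum>t\<in>T. \<Sum>i\<in>Qset J. u t i) + (\<Sum>t\<in>T. \<Sum>k\<in>UNIV. v t $ k)"

lemma cglp_feasible_iff:
  "cglp_feasible A b J T D d0 \<alpha> \<beta> u v \<longleftrightarrow>
     cut_multipliers A b J T D d0 \<alpha> \<beta> u v \<and> multiplier_mass J T u v = 1"
  unfolding cglp_feasible_def cut_multipliers_def multiplier_mass_def
  by (auto simp: algebra_simps)

lemma rcv_feasible_iff:
  fixes A :: "real^'n::finite^'m::finite"
  shows "rcv_feasible A b J T D d0 \<alpha>c \<beta>c \<theta> \<delta> u v \<longleftrightarrow>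
     0 \<le> \<theta> \<and> \<theta> \<le> 1
   \<and> (\<forall>j\<in>Qset J. \<delta> j \<in> {0, 1}) \<and> (\<forall>j. j \<notin> Qset J \<longrightarrow> \<delta> j = 0)
   \<and> (\<forall>j\<in>Qset J. \<forall>t\<in>T. u t j \<le> \<delta> j)
   \<and> (\<Sum>j\<in>Qset J. \<delta> j) \<le> real CARD('n)
   \<and> (\<forall>N. N \<subseteq> Qset J \<longrightarrow> (\<Sum>j\<in>N. \<delta> j) \<le> real (rank_rows (Atil A) N))
   \<and> cut_multipliers A b J T D d0 (\<theta> *\<^sub>R \<alpha>c) (\<theta> * \<beta>c) u v"
  unfolding rcv_feasible_def cut_multipliers_def
  by (auto simp: algebra_simps)

lemma cut_multipliers_scale:
  assumes "cut_multipliers A b J T D d0 \<alpha> \<beta> u v" and "0 \<le> c"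
  shows "cut_multipliers A b J T D d0 (c *\<^sub>R \<alpha>) (c * \<beta>) (\<lambda>t i. c * u t i) (\<lambda>t. c *\<^sub>R v t)"
  using assms unfolding cut_multipliers_def
  by (simp add: scaleR_vector_matrix_assoc scaleR_sum_right sum_distrib_left
      scaleR_add_right distrib_left mult.assoc)

lemma multiplier_mass_scale:
  "multiplier_mass J T (\<lambda>t i. c * u t i) (\<lambda>t. c *\<^sub>R v t) = c * multiplier_mass J T u v"
  unfolding multiplier_mass_def by (simp add: sum_distrib_left distrib_left)

lemma Nsupp_scale: "0 < c \<Longrightarrow> Nsupp J T (\<lambda>t i. c * u t i) = Nsupp J T u"
  unfolding Nsupp_def by (simp add: zero_less_mult_iff)

lemma cut_multipliers_le_mass:
  assumes cut: "cut_multipliers A b J T D d0 \<alpha> \<beta> u v"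
    and "finite T" and "t \<in> T" and "j \<in> Qset J"
  shows "u t j \<le> multiplier_mass J T u v"
proof -
  have u_nonneg: "\<forall>t\<in>T. \<forall>i\<in>Qset J. 0 \<le> u t i" and v_nonneg: "\<forall>t\<in>T. \<forall>k. 0 \<le> v t $ k"
    using cut unfolding cut_multipliers_def by auto
  have "u t j \<le> (\<Sum>i\<in>Qset J. u t i)"
    using u_nonneg assms(3,4) by (intro member_le_sum) auto
  also have "\<dots> \<le> (\<Sum>t\<in>T. \<Sum>i\<in>Qset J. u t i)"
    using u_nonneg assms(2,3) by (intro member_le_sum[of t T "\<lambda>t. \<Sum>i\<in>Qset J. u t i"] sum_nonneg) auto
  also have "\<dots> \<le> multiplier_mass J T u v"
    using v_nonneg unfolding multiplier_mass_def by (simp add: sum_nonneg)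
  finally show ?thesis .
qed

lemma cut_multipliers_mass_pos:
  assumes cut: "cut_multipliers A b J T D d0 \<alpha> \<beta> u v"
    and "finite T" and "T \<noteq> {}" and "\<alpha> \<noteq> 0 \<or> \<beta> \<noteq> 0"
  shows "0 < multiplier_mass J T u v"
proof (rule ccontr)
  assume "\<not> 0 < multiplier_mass J T u v"
  have u_nonneg: "\<forall>t\<in>T. \<forall>i\<in>Qset J. 0 \<le> u t i" and v_nonneg: "\<forall>t\<in>T. \<forall>k. 0 \<le> v t $ k"
    using cut unfolding cut_multipliers_def by auto
  moreover have "0 \<le> (\<Sum>t\<in>T. \<Sum>i\<in>Qset J. u t i)" and "0 \<le> (\<Sum>t\<in>T. \<Sum>k\<in>UNIV. v t $ k)"
    using u_nonneg v_nonneg by (simp_all add: sum_nonneg)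
  ultimately have "(\<Sum>t\<in>T. \<Sum>i\<in>Qset J. u t i) = 0" and "(\<Sum>t\<in>T. \<Sum>k\<in>UNIV. v t $ k) = 0"
    using \<open>\<not> 0 < multiplier_mass J T u v\<close> unfolding multiplier_mass_def by linarith+
  moreover obtain t where "t \<in> T"
    using assms(3) by blast
  ultimately have "\<forall>i\<in>Qset J. u t i = 0" and "v t = 0"
    using u_nonneg v_nonneg assms(2) by (simp_all add: sum_nonneg sum_nonneg_eq_0_iff vec_eq_iff)
  then have "\<alpha> = 0" and "\<beta> = 0"
    using cut \<open>t \<in> T\<close> unfolding cut_multipliers_def by auto
  with assms(4) show False
    by simp
qed

lemma rcv_feasible_support_full_row_rank:
  assumes "rcv_feasible A b J T D d0 \<alpha>c \<beta>c \<theta> \<delta> u v"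
  shows "full_row_rank (Atil A) (Nsupp J T u)"
proof -
  let ?N = "Nsupp J T u"
  have "finite ?N"
    by (rule finite_subset[of _ "Qset J"]) (auto simp: Nsupp_def)
  have "\<delta> j = 1" if "j \<in> ?N" for j
    using assms that unfolding rcv_feasible_iff Nsupp_def by fastforce
  then have "real (card ?N) = (\<Sum>j\<in>?N. \<delta> j)"
    by simp
  also have "\<dots> \<le> real (rank_rows (Atil A) ?N)"
    using assms unfolding rcv_feasible_iff by (auto simp: Nsupp_def)
  finally show ?thesis
    using \<open>finite ?N\<close> by (simp add: full_row_rank_iff_card_le_rank)
qed

lemma rcv_feasible_of_extended_regular:
  fixes A :: "real^'n::finite^'m::finite"
  assumes regular: "extended_regular A b J T D d0 (s *\<^sub>R \<alpha>c) (s * \<beta>c) u v"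
    and "finite T" and "0 < s" and "0 < c" and "c \<le> 1" and "c * s \<le> 1"
  shows "rcv_feasible A b J T D d0 \<alpha>c \<beta>c (c * s) (indicator (Nsupp J T u))
           (\<lambda>t i. c * u t i) (\<lambda>t. c *\<^sub>R v t)"
proof -
  let ?N = "Nsupp J T u"
  have cut: "cut_multipliers A b J T D d0 (s *\<^sub>R \<alpha>c) (s * \<beta>c) u v"
    and mass: "multiplier_mass J T u v = 1" and rank_N: "full_row_rank (Atil A) ?N"
    using regular unfolding extended_regular_def cglp_feasible_iff by auto
  have "?N \<subseteq> Qset J"
    by (auto simp: Nsupp_def)
  then have "finite ?N"
    by (rule finite_subset) simp
  have rank: "(\<Sum>j\<in>M. indicator ?N j) \<le> real (rank_rows (Atil A) M)" if "M \<subseteq> Qset J" for M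
  proof -
    have "finite M"
      using that by (rule finite_subset) simp
    then have "(\<Sum>j\<in>M. indicator ?N j) = real (card (M \<inter> ?N))"
      by (simp add: indicator_def sum.If_cases)
    also have "card (M \<inter> ?N) = rank_rows (Atil A) (M \<inter> ?N)"
      using full_row_rank_subset[OF rank_N \<open>finite ?N\<close>, of "M \<inter> ?N"]
      unfolding full_row_rank_def by simp
    also have "\<dots> \<le> rank_rows (Atil A) M"
      by (rule rank_rows_mono) simp
    finally show ?thesis
      by simp
  qed
  have "(\<Sum>j\<in>Qset J. indicator ?N j) \<le> real CARD('n)"
    using rank[of "Qset J"] rank_rows_le_dimension[of "Atil A" "Qset J"] by simp
  moreover have "c * u t j \<le> indicator ?N j" if "j \<in> Qset J" and "t \<in> T" for j t
  proof (cases "j \<in> ?N")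
    case True
    have "u t j \<le> 1"
      using cut_multipliers_le_mass[OF cut \<open>finite T\<close> that(2,1)] mass by simp
    then have "c * u t j \<le> 1 * 1"
      using cut that \<open>0 < c\<close> \<open>c \<le> 1\<close> unfolding cut_multipliers_def
      by (intro mult_mono) auto
    then show ?thesis
      using True by simp
  next
    case False
    then have "u t j \<le> 0"
      using that by (auto simp: Nsupp_def)
    then show ?thesis
      using False \<open>0 < c\<close> by (simp add: mult_nonneg_nonpos)
  qed
  moreover have "cut_multipliers A b J T D d0 ((c * s) *\<^sub>R \<alpha>c) ((c * s) * \<beta>c)
      (\<lambda>t i. c * u t i) (\<lambda>t. c *\<^sub>R v t)"
    using cut_multipliers_scale[OF cut, of c] \<open>0 < c\<close> by (simp add: mult.assoc)
  ultimately show ?thesis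
    using rank \<open>0 < s\<close> \<open>0 < c\<close> \<open>c * s \<le> 1\<close> \<open>?N \<subseteq> Qset J\<close>
    unfolding rcv_feasible_iff by (auto simp: indicator_def)
qed

lemma not_strictly_irregular_of_rcv_feasible:
  assumes feasible: "rcv_feasible A b J T D d0 \<alpha>c \<beta>c \<theta> \<delta> u v"
    and "0 < \<theta>" and "finite T" and "T \<noteq> {}" and "\<alpha>c \<noteq> 0 \<or> \<beta>c \<noteq> 0"
  shows "\<not> strictly_irregular A b J T D d0 \<alpha>c \<beta>c"
proof -
  have cut: "cut_multipliers A b J T D d0 (\<theta> *\<^sub>R \<alpha>c) (\<theta> * \<beta>c) u v"
    using feasible unfolding rcv_feasible_iff by blast
  define \<sigma> where "\<sigma> = multiplier_mass J T u v"
  have "0 < \<sigma>"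
    unfolding \<sigma>_def using assms(2-5) by (intro cut_multipliers_mass_pos[OF cut]) auto
  let ?u = "\<lambda>t i. inverse \<sigma> * u t i" and ?v = "\<lambda>t. inverse \<sigma> *\<^sub>R v t"
  have "cut_multipliers A b J T D d0 ((\<theta> / \<sigma>) *\<^sub>R \<alpha>c) ((\<theta> / \<sigma>) * \<beta>c) ?u ?v"
    using cut_multipliers_scale[OF cut, of "inverse \<sigma>"] \<open>0 < \<sigma>\<close> by (simp add: field_simps)
  moreover have "multiplier_mass J T ?u ?v = 1"
    using \<open>0 < \<sigma>\<close> by (simp add: multiplier_mass_scale \<sigma>_def[symmetric])
  moreover have "full_row_rank (Atil A) (Nsupp J T ?u)"
    using rcv_feasible_support_full_row_rank[OF feasible] \<open>0 < \<sigma>\<close> by (simp add: Nsupp_scale)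
  ultimately have "extended_regular A b J T D d0 ((\<theta> / \<sigma>) *\<^sub>R \<alpha>c) ((\<theta> / \<sigma>) * \<beta>c) ?u ?v"
    unfolding extended_regular_def cglp_feasible_iff by blast
  moreover have "0 < \<theta> / \<sigma>"
    using \<open>0 < \<theta>\<close> \<open>0 < \<sigma>\<close> by simp
  ultimately show ?thesis
    unfolding strictly_irregular_def by blast
qed

theorem theorem4:
  fixes A :: "real^'n::finite^'m::finite" and b :: "real^'m" and J :: "'n set"
    and T :: "'t set" and D :: "'t \<Rightarrow> real^'n^'r::finite" and d0 :: "'t \<Rightarrow> real^'r"
    and xbar :: "real^'n"
    and \<alpha>b :: "real^'n" and \<beta>b :: real
    and ub :: "'t \<Rightarrow> ('m,'n) qidx \<Rightarrow> real" and vb :: "'t \<Rightarrow> real^'r"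
    and \<theta>c :: real and \<delta>c :: "('m,'n) qidx \<Rightarrow> real"
    and uc :: "'t \<Rightarrow> ('m,'n) qidx \<Rightarrow> real" and vc :: "'t \<Rightarrow> real^'r"
  assumes "\<forall>i j. A $ i $ j \<in> \<rat>" and "\<forall>i. b $ i \<in> \<rat>"
    and "\<forall>t\<in>T. \<forall>k j. D t $ k $ j \<in> \<rat>" and "\<forall>t\<in>T. \<forall>k. d0 t $ k \<in> \<rat>"
    and "finite T"
    and "xbar \<in> lp_relax A b J"
    and "cglp_basic A b J T D d0 \<alpha>b \<beta>b ub vb"
    and "cglp_optimal A b J T D d0 xbar \<alpha>b \<beta>b ub vb"
    and "\<alpha>b \<bullet> xbar < \<beta>b"
    and "rcv_optimal A b J T D d0 \<alpha>b \<beta>b \<theta>c \<delta>c uc vc"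
  shows "\<not> strictly_irregular A b J T D d0 \<alpha>b \<beta>b \<longleftrightarrow> \<theta>c > 0"
proof
  assume "\<not> strictly_irregular A b J T D d0 \<alpha>b \<beta>b"
  then obtain s u v where "0 < s" and regular: "extended_regular A b J T D d0 (s *\<^sub>R \<alpha>b) (s * \<beta>b) u v"
    unfolding strictly_irregular_def by blast
  define c where "c = 1 / (s + 1)"
  have "0 < c" "c \<le> 1" "c * s \<le> 1"
    using \<open>0 < s\<close> unfolding c_def by (auto simp: field_simps)
  then have "rcv_feasible A b J T D d0 \<alpha>b \<beta>b (c * s) (indicator (Nsupp J T u))
      (\<lambda>t i. c * u t i) (\<lambda>t. c *\<^sub>R v t)"
    using rcv_feasible_of_extended_regular[OF regular \<open>finite T\<close> \<open>0 < s\<close>] by blast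
  then have "c * s \<le> \<theta>c"
    using \<open>rcv_optimal A b J T D d0 \<alpha>b \<beta>b \<theta>c \<delta>c uc vc\<close> unfolding rcv_optimal_def by blast
  then show "0 < \<theta>c"
    using mult_pos_pos[OF \<open>0 < c\<close> \<open>0 < s\<close>] by linarith
next
  assume "0 < \<theta>c"
  \<comment> \<open>Only the normalisation of the CGLP (so \<open>T \<noteq> {}\<close>) and the separation (so the cut is
    not zero) are needed from the hypotheses on the CGLP solution.\<close>
  have "multiplier_mass J T ub vb = 1"
    using \<open>cglp_basic A b J T D d0 \<alpha>b \<beta>b ub vb\<close> unfolding cglp_basic_def cglp_feasible_iff by blast
  then have "T \<noteq> {}"
    unfolding multiplier_mass_def by auto
  moreover have "\<alpha>b \<noteq> 0 \<or> \<beta>b \<noteq> 0"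
    using \<open>\<alpha>b \<bullet> xbar < \<beta>b\<close> by auto
  moreover have "rcv_feasible A b J T D d0 \<alpha>b \<beta>b \<theta>c \<delta>c uc vc"
    using \<open>rcv_optimal A b J T D d0 \<alpha>b \<beta>b \<theta>c \<delta>c uc vc\<close> unfolding rcv_optimal_def by blast
  ultimately show "\<not> strictly_irregular A b J T D d0 \<alpha>b \<beta>b"
    using not_strictly_irregular_of_rcv_feasible \<open>0 < \<theta>c\<close> \<open>finite T\<close> by blast
qed

end
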